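(* Let $m\geq 3$ be an odd integer, let $g:\mathrm{GF}(2^m)\to\mathrm{GF}(2^m)$ be an almost bent function with $g(0)=0$, let $A$ be an additive subgroup of $(\mathrm{GF}(2^m),+)$ of order $2^r$ with $1\le r\le m$, let $$\mathcal{C}_{(g,A)}=\{(\mathrm{Tr}_1^m(ag(x)+bx))_{x\in \mathrm{GF}(2^m)^*}: a\in A,\ b\in \mathrm{GF}(2^m)\},$$ and let $\mathcal{D}=\overline{\mathcal{C}_{(g,A)}^\perp}^\perp$, a binary code of length $2^m$ whose coordinates are indexed by $\mathcal{P}=\{0,1,\dots,2^m-1\}$. Its weight distribution is: $A_0=1$, $A_{2^{m-1}-2^{(m-1)/2}}=2^{m-1}(2^r-1)$, $A_{2^{m-1}}=2^{m+r}+2^m-2$, $A_{2^{m-1}+2^{(m-1)/2}}=2^{m-1}(2^r-1)$, $A_{2^m}=1$, and $A_k=0$ otherwise. For any $k$ with $A_k\ne0$, let $\mathcal{B}$ be the set of supports of the codewords of $\mathcal{D}$ of Hamming weight $k$. If $r=m$, then $(\mathcal{P},\mathcal{B})$ is a $3$-$(2^m,k,\lambda)$ design with $$\lambda=\frac{k(k-1)(k-2)A_k}{2^m(2^m-1)(2^m-2)}.$$ If $r\neq m$, then $(\mathcal{P},\mathcal{B})$ is a $1$-$(2^m,k,\lambda)$ design with $\lambda=\frac{kA_k}{2^m}$.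
   Context: $\mathrm{Tr}_1^m$ is the absolute trace from $\mathrm{GF}(2^m)$ to $\mathrm{GF}(2)$. A function $g:\mathrm{GF}(2^m)\to\mathrm{GF}(2^m)$ is almost bent if $\sum_{x\in\mathrm{GF}(2^m)}(-1)^{\mathrm{Tr}_1^m(ag(x)+bx)}\in\{0,\pm2^{(m+1)/2}\}$ for all $a\neq0$, $b$. For a binary linear code $\mathcal{C}$ of length $n$, $\mathcal{C}^\perp$ is its dual and $\overline{\mathcal{C}}$ is its extended code of length $n+1$, obtained by appending the overall parity coordinate $\sum_i c_i$ to each codeword. The support of a codeword $c=(c_0,\dots,c_{n-1})$ is $\{i: c_i\neq 0\}$. A $t$-$(n,k,\lambda)$ design is a pair $(\mathcal{P},\mathcal{B})$ where $\mathcal{P}$ is a set of $n$ points and $\mathcal{B}$ a set of $k$-subsets of $\mathcal{P}$ (blocks) such that every $t$-subset of $\mathcal{P}$ is contained in exactly $\lambda$ blocks. *)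

theory Defs
  imports Complex_Main
begin

text \<open>Absolute trace from GF(2^m) to GF(2), as an element of the field (it is 0 or 1).\<close>
definition tr :: "nat \<Rightarrow> 'a::field \<Rightarrow> 'a" where
  "tr m x = (\<Sum>i<m. x ^ (2 ^ i))"

definition trbit :: "nat \<Rightarrow> 'a::field \<Rightarrow> nat" where
  "trbit m x = (if tr m x = 1 then 1 else 0)"

definition almost_bent :: "nat \<Rightarrow> ('a::{field,finite} \<Rightarrow> 'a) \<Rightarrow> bool" where
  "almost_bent m g \<longleftrightarrow>
     (\<forall>a b. a \<noteq> 0 \<longrightarrow>
        (\<Sum>x\<in>(UNIV::'a set). (-1::int) ^ trbit m (a * g x + b * x))
          \<in> {0, 2 ^ ((m + 1) div 2), - (2 ^ ((m + 1) div 2))})"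

definition additive_subgroup :: "'a::ab_group_add set \<Rightarrow> bool" where
  "additive_subgroup A \<longleftrightarrow> 0 \<in> A \<and> (\<forall>x\<in>A. \<forall>y\<in>A. x + y \<in> A \<and> x - y \<in> A)"

text \<open>Binary words with coordinates indexed by a finite set I are modelled as
  functions functions from indices to bool that are False outside I (True = bit 1).\<close>

definition words :: "'i set \<Rightarrow> ('i \<Rightarrow> bool) set" where
  "words I = {c. \<forall>i. i \<notin> I \<longrightarrow> \<not> c i}"

definition dual_code :: "'i set \<Rightarrow> ('i \<Rightarrow> bool) set \<Rightarrow> ('i \<Rightarrow> bool) set" where
  "dual_code I C = {d \<in> words I. \<forall>c\<in>C. even (card {i\<in>I. c i \<and> d i})}"

definition extend_code :: "'i set \<Rightarrow> 'i \<Rightarrow> ('i \<Rightarrow> bool) set \<Rightarrow> ('i \<Rightarrow> bool) set" where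
  "extend_code I e C = (\<lambda>c. c(e := odd (card {i\<in>I. c i}))) ` C"

definition supp :: "('i \<Rightarrow> bool) \<Rightarrow> 'i set" where
  "supp c = {i. c i}"

definition hweight :: "('i \<Rightarrow> bool) \<Rightarrow> nat" where
  "hweight c = card (supp c)"

definition code_gA :: "nat \<Rightarrow> ('a::{field,finite} \<Rightarrow> 'a) \<Rightarrow> 'a set \<Rightarrow> ('a \<Rightarrow> bool) set" where
  "code_gA m g A = {(\<lambda>x. x \<noteq> 0 \<and> tr m (a * g x + b * x) = 1) | a b. a \<in> A}"

text \<open>The code D = ext(C^perp)^perp of length 2^m; coordinates indexed by the field,
  the parity coordinate being placed at the field element 0.\<close>
definition code_D :: "nat \<Rightarrow> ('a::{field,finite} \<Rightarrow> 'a) \<Rightarrow> 'a set \<Rightarrow> ('a \<Rightarrow> bool) set" where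
  "code_D m g A = dual_code (UNIV::'a set)
      (extend_code (UNIV - {0}) 0 (dual_code (UNIV - {0}) (code_gA m g A)))"

definition weight_count :: "('i \<Rightarrow> bool) set \<Rightarrow> nat \<Rightarrow> nat" where
  "weight_count C k = card {c\<in>C. hweight c = k}"

definition t_design :: "'p set \<Rightarrow> 'p set set \<Rightarrow> nat \<Rightarrow> nat \<Rightarrow> nat \<Rightarrow> real \<Rightarrow> bool" where
  "t_design P B t v k lam \<longleftrightarrow> finite P \<and> card P = v \<and>
     (\<forall>b\<in>B. b \<subseteq> P \<and> card b = k) \<and>
     (\<forall>T. T \<subseteq> P \<and> card T = t \<longrightarrow> real (card {b\<in>B. T \<subseteq> b}) = lam)"

end

theory Submission
  imports Defs "HOL-Computational_Algebra.Polynomial"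
begin

(* The code D turns out to consist of the words x \<mapsto> Tr(a g(x) + b x) + e with a \<in> A,
   b \<in> GF(2^m), e \<in> GF(2): extending C^\<bottom> by a parity bit is dual to adjoining the all-one word
   to C, and the dual of the dual is the code itself. Such a word has weight (2^m \<mp> W(a,b))/2,
   where W is the Walsh transform of g, so the weight distribution follows from the Walsh values
   0, \<plusminus>2^((m+1)/2) of the almost bent function g and Parseval's identity. The number of codewords
   of weight k whose support contains a given set T is a character sum over (a,b) of a function
   of W(a,b). For |T| = 1 Walsh inversion shows that it does not depend on T; for |T| = 3 and A the
   whole field, the fact that almost bent functions are almost perfect nonlinear shows the same.
   Double counting of incidences between t-sets and blocks then gives \<lambda>. *)

lemma of_nat_card_UNIV_eq_0: "of_nat (card (UNIV::'a::{ring_1,finite} set)) = (0::'a)"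
proof -
  have "(\<Sum>x\<in>UNIV. x + 1) = (\<Sum>x\<in>(UNIV::'a set). x)"
    by (rule sum.reindex_bij_betw) (auto simp: bij_betw_def inj_on_def intro!: image_eqI[where x="_ - 1"])
  then show ?thesis
    by (simp add: sum.distrib)
qed

lemma two_eq_zero_if_card_eq_pow2:
  assumes "card (UNIV::'a::{field,finite} set) = 2 ^ m"
  shows "(2::'a) = 0"
  using of_nat_card_UNIV_eq_0[where 'a='a] assms by simp

lemma power_card_UNIV_eq: "(x::'a::{field,finite}) ^ card (UNIV::'a set) = x"
proof (cases "x = 0")
  case False
  let ?S = "UNIV - {0::'a}"
  have "(\<Prod>y\<in>?S. x * y) = (\<Prod>y\<in>?S. y)"
    by (rule prod.reindex_bij_betw, rule bij_betw_byWitness[where f'="\<lambda>y. y / x"]) (use False in auto)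
  then have "x ^ card ?S = 1"
    by (simp add: prod.distrib)
  moreover have "card (UNIV::'a set) = Suc (card ?S)"
    by (simp add: card_Diff_singleton card_gt_0_iff)
  ultimately show ?thesis
    by (simp only: power_Suc mult_1_right)
qed (simp add: card_gt_0_iff)

lemma char_two_add_self:
  assumes "(2::'a::ring_1) = 0" shows "x + x = (0::'a)"
  using assms mult_2[of x] by simp

lemma char_two_frobenius:
  assumes "(2::'a::comm_ring_1) = 0" shows "(x + y) ^ (2 ^ i) = x ^ (2 ^ i) + (y::'a) ^ (2 ^ i)"
proof (induction i)
  case (Suc i)
  have "(x + y) ^ (2 ^ Suc i) = ((x + y) ^ 2 ^ i) ^ 2"
    by (simp add: power_mult[symmetric] mult.commute)
  also have "\<dots> = (x ^ 2 ^ i) ^ 2 + (y ^ 2 ^ i) ^ 2"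
    using assms by (simp add: Suc power2_sum)
  also have "\<dots> = x ^ (2 ^ Suc i) + y ^ (2 ^ Suc i)"
    by (simp add: power_mult[symmetric] mult.commute)
  finally show ?case .
qed simp

lemma char_two_sum_power:
  assumes "(2::'a::comm_ring_1) = 0"
  shows "(\<Sum>i\<in>I. f i) ^ (2 ^ j) = (\<Sum>i\<in>I. (f i :: 'a) ^ (2 ^ j))"
  by (induction I rule: infinite_finite_induct) (simp_all add: char_two_frobenius[OF assms] power_0_left)

lemma tr_zero [simp]: "tr m (0::'a::field) = 0"
  by (simp add: tr_def power_0_left)

context
  fixes m :: nat
  assumes card_UNIV: "card (UNIV::'a::{field,finite} set) = 2 ^ m"
begin

lemma tr_add: "tr m ((x::'a) + y) = tr m x + tr m y"
  by (simp add: tr_def char_two_frobenius[OF two_eq_zero_if_card_eq_pow2[OF card_UNIV]] sum.distrib)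

lemma tr_square: "tr m (x::'a) ^ 2 = tr m x"
proof -
  have "tr m x ^ 2 = (\<Sum>i<m. x ^ (2 ^ Suc i))"
    using char_two_sum_power[OF two_eq_zero_if_card_eq_pow2[OF card_UNIV], of "\<lambda>i. x ^ 2 ^ i" _ 1]
    by (simp add: tr_def power_mult[symmetric] mult.commute)
  then have "x + tr m x ^ 2 = (\<Sum>i<Suc m. x ^ (2 ^ i))"
    by (subst sum.lessThan_Suc_shift) simp
  also have "\<dots> = x + tr m x"
    using power_card_UNIV_eq[of x] by (simp add: card_UNIV tr_def)
  finally show ?thesis
    by simp
qed

lemma tr_eq_0_or_1: "tr m (x::'a) = 0 \<or> tr m x = 1"
proof -
  have "tr m x * (tr m x - 1) = 0"
    using tr_square[of x] by (simp add: algebra_simps power2_eq_square)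
  then show ?thesis
    by simp
qed

lemma tr_add_eq_1_iff: "tr m ((x::'a) + y) = 1 \<longleftrightarrow> (tr m x = 1) \<noteq> (tr m y = 1)"
  using tr_eq_0_or_1[of x] tr_eq_0_or_1[of y] two_eq_zero_if_card_eq_pow2[OF card_UNIV]
  by (auto simp: tr_add)

lemma ex_tr_eq_1: "\<exists>y::'a. tr m y = 1"
proof (rule ccontr)
  assume "\<nexists>y::'a. tr m y = 1"
  then have tr_UNIV: "tr m y = 0" for y :: 'a
    using tr_eq_0_or_1 by blast
  have "2 \<le> card (UNIV::'a set)"
    using card_mono[of UNIV "{0::'a, 1}"] by simp
  then have "m \<noteq> 0"
    using card_UNIV by (cases "m = 0") auto
  define p :: "'a poly" where "p = (\<Sum>i<m. monom 1 (2 ^ i))"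
  have "coeff p (2 ^ (m - 1)) = 1"
    using \<open>m \<noteq> 0\<close> by (simp add: p_def coeff_sum)
  then have "p \<noteq> 0"
    by auto
  have "{x. poly p x = 0} = UNIV"
    using tr_UNIV by (simp add: p_def poly_sum poly_monom tr_def)
  then have "card (UNIV::'a set) \<le> degree p"
    using card_poly_roots_bound[OF \<open>p \<noteq> 0\<close>] by simp
  moreover have "degree p \<le> 2 ^ (m - 1)"
    unfolding p_def by (rule degree_sum_le) (auto simp: degree_monom_eq intro: power_increasing)
  moreover have "(2::nat) ^ (m - 1) < 2 ^ m"
    using \<open>m \<noteq> 0\<close> by simp
  ultimately show False
    using card_UNIV by linarith
qed

end

section \<open>The canonical additive character and the Walsh transform\<close>

definition chi :: "nat \<Rightarrow> 'a::field \<Rightarrow> int" where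
  "chi m x = (-1) ^ trbit m x"

lemma chi_eq_if: "chi m x = (if tr m x = 1 then -1 else 1)"
  by (simp add: chi_def trbit_def)

lemma chi_zero [simp]: "chi m 0 = 1"
  by (simp add: chi_eq_if)

context
  fixes m :: nat
  assumes card_UNIV: "card (UNIV::'a::{field,finite} set) = 2 ^ m"
begin

lemma chi_add: "chi m ((x::'a) + y) = chi m x * chi m y"
  using tr_eq_0_or_1[OF card_UNIV, of x] tr_eq_0_or_1[OF card_UNIV, of y] tr_add[OF card_UNIV, of x y]
  by (auto simp: chi_eq_if)

lemma sum_chi: "(\<Sum>x\<in>UNIV. chi m (x::'a)) = 0"
proof -
  obtain y :: 'a where "tr m y = 1"
    using ex_tr_eq_1[OF card_UNIV] by blast
  then have "chi m y = -1"
    by (simp add: chi_eq_if)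
  then have "(\<Sum>x\<in>UNIV. chi m (x + y)) = - (\<Sum>x\<in>UNIV. chi m (x::'a))"
    by (simp add: chi_add sum_negf)
  moreover have "(\<Sum>x\<in>UNIV. chi m (x + y)) = (\<Sum>x\<in>UNIV. chi m (x::'a))"
    by (rule sum.reindex_bij_betw[OF bij_plus_right])
  ultimately show ?thesis
    by simp
qed

lemma sum_chi_mult: "(\<Sum>b\<in>UNIV. chi m (b * z)) = (if (z::'a) = 0 then 2 ^ m else 0)"
proof (cases "z = 0")
  case False
  have "bij (\<lambda>b. b * z)"
    by (rule bij_betw_byWitness[where f'="\<lambda>b. b / z"]) (use False in auto)
  then have "(\<Sum>b\<in>UNIV. chi m (b * z)) = (\<Sum>b\<in>UNIV. chi m (b::'a))"
    using sum.reindex_bij_betw[of _ UNIV UNIV "chi m"] by blast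
  then show ?thesis
    using False sum_chi by simp
qed (simp add: card_UNIV)

end

definition walsh :: "nat \<Rightarrow> ('a::{field,finite} \<Rightarrow> 'a) \<Rightarrow> 'a \<Rightarrow> 'a \<Rightarrow> int" where
  "walsh m g a b = (\<Sum>x\<in>UNIV. chi m (a * g x + b * x))"

definition autocorrelation :: "nat \<Rightarrow> ('a::{field,finite} \<Rightarrow> 'a) \<Rightarrow> 'a \<Rightarrow> 'a \<Rightarrow> int" where
  "autocorrelation m g a u = (\<Sum>x\<in>UNIV. chi m (a * (g x + g (x + u))))"

locale binary_field_function =
  fixes m :: nat and g :: "'a::{field,finite} \<Rightarrow> 'a"
  assumes card_UNIV: "card (UNIV::'a set) = 2 ^ m"
begin

lemma add_self_eq_0 [simp]: "x + x = (0::'a)"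
  by (rule char_two_add_self[OF two_eq_zero_if_card_eq_pow2[OF card_UNIV]])

lemma add_self_left [simp]: "x + (x + y) = (y::'a)"
  by (simp add: add.assoc[symmetric])

lemma add_eq_0_iff_eq: "x + y = 0 \<longleftrightarrow> x = (y::'a)"
  by (metis add_self_left add_0_right)

lemmas chi_add = chi_add[OF card_UNIV]
lemmas sum_chi_mult = sum_chi_mult[OF card_UNIV]

lemma walsh_zero_left: "walsh m g 0 b = (if b = 0 then 2 ^ m else 0)"
  using sum_chi_mult[of b] by (simp add: walsh_def mult.commute)

lemma walsh_eq_card: "walsh m g a b = 2 ^ m - 2 * int (card {x. tr m (a * g x + b * x) = 1})"
proof -
  have "walsh m g a b = (\<Sum>x\<in>UNIV. 1 - 2 * of_bool (tr m (a * g x + b * x) = 1))"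
    unfolding walsh_def by (intro sum.cong refl) (simp add: chi_eq_if)
  then show ?thesis
    by (simp add: sum_subtractf sum_distrib_left[symmetric] card_UNIV)
qed

lemma autocorrelation_zero_right: "autocorrelation m g a 0 = 2 ^ m"
  by (simp add: autocorrelation_def card_UNIV)

lemma autocorrelation_zero_left: "autocorrelation m g 0 u = 2 ^ m"
  by (simp add: autocorrelation_def card_UNIV)

lemma walsh_inversion: "(\<Sum>b\<in>UNIV. walsh m g a b * chi m (b * u)) = 2 ^ m * chi m (a * g u)"
proof -
  have "(\<Sum>b\<in>UNIV. walsh m g a b * chi m (b * u)) =
      (\<Sum>b\<in>UNIV. \<Sum>x\<in>UNIV. chi m (a * g x) * chi m (b * (x + u)))"
    unfolding walsh_def sum_distrib_right
    by (intro sum.cong refl) (simp add: chi_add[symmetric] distrib_left add.assoc)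
  also have "\<dots> = (\<Sum>x\<in>UNIV. chi m (a * g x) * (\<Sum>b\<in>UNIV. chi m (b * (x + u))))"
    by (subst sum.swap) (simp add: sum_distrib_left)
  also have "\<dots> = (\<Sum>x\<in>UNIV. if x = u then 2 ^ m * chi m (a * g x) else 0)"
    by (intro sum.cong refl) (simp add: sum_chi_mult add_eq_0_iff_eq)
  finally show ?thesis
    by simp
qed

lemma walsh_square: "walsh m g a b ^ 2 = (\<Sum>u\<in>UNIV. chi m (b * u) * autocorrelation m g a u)"
proof -
  have "walsh m g a b ^ 2 = (\<Sum>x\<in>UNIV. \<Sum>y\<in>UNIV. chi m (a * g x + b * x) * chi m (a * g y + b * y))"
    by (simp add: power2_eq_square walsh_def sum_product)
  also have "\<dots> = (\<Sum>x\<in>UNIV. \<Sum>u\<in>UNIV. chi m (a * g x + b * x) * chi m (a * g (u + x) + b * (u + x)))"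
    by (intro sum.cong refl sum.reindex_bij_betw[OF bij_plus_right, symmetric])
  also have "\<dots> = (\<Sum>x\<in>UNIV. \<Sum>u\<in>UNIV. chi m (b * u) * chi m (a * (g x + g (x + u))))"
  proof (intro sum.cong refl)
    fix x u
    have "a * g x + b * x + (a * g (u + x) + b * (u + x)) = b * u + a * (g x + g (x + u))"
      by (simp add: distrib_left add.commute add.left_commute)
    then show "chi m (a * g x + b * x) * chi m (a * g (u + x) + b * (u + x)) =
        chi m (b * u) * chi m (a * (g x + g (x + u)))"
      by (metis chi_add)
  qed
  also have "\<dots> = (\<Sum>u\<in>UNIV. chi m (b * u) * autocorrelation m g a u)"
    by (subst sum.swap) (simp add: autocorrelation_def sum_distrib_left)
  finally show ?thesis .
qed

lemma sum_walsh_square_chi: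
  "(\<Sum>b\<in>UNIV. walsh m g a b ^ 2 * chi m (b * v)) = 2 ^ m * autocorrelation m g a v"
proof -
  have "(\<Sum>b\<in>UNIV. walsh m g a b ^ 2 * chi m (b * v)) =
      (\<Sum>b\<in>UNIV. \<Sum>u\<in>UNIV. autocorrelation m g a u * chi m (b * (u + v)))"
    unfolding walsh_square sum_distrib_right
    by (intro sum.cong refl) (simp add: chi_add distrib_left mult_ac)
  also have "\<dots> = (\<Sum>u\<in>UNIV. autocorrelation m g a u * (\<Sum>b\<in>UNIV. chi m (b * (u + v))))"
    by (subst sum.swap) (simp add: sum_distrib_left)
  also have "\<dots> = (\<Sum>u\<in>UNIV. if u = v then 2 ^ m * autocorrelation m g a u else 0)"
    by (intro sum.cong refl) (simp add: sum_chi_mult add_eq_0_iff_eq)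
  finally show ?thesis
    by simp
qed

lemma parseval: "(\<Sum>b\<in>UNIV. walsh m g a b ^ 2) = 2 ^ m * 2 ^ m"
  using sum_walsh_square_chi[of a 0] by (simp add: autocorrelation_zero_right)

lemma sum_walsh_fourth:
  "(\<Sum>b\<in>UNIV. walsh m g a b ^ 4) = 2 ^ m * (\<Sum>u\<in>UNIV. autocorrelation m g a u ^ 2)"
proof -
  have "(\<Sum>b\<in>UNIV. walsh m g a b ^ 4) =
      (\<Sum>b\<in>UNIV. \<Sum>u\<in>UNIV. autocorrelation m g a u * (walsh m g a b ^ 2 * chi m (b * u)))"
  proof (rule sum.cong[OF refl])
    fix b
    have "walsh m g a b ^ 4 = walsh m g a b ^ 2 * walsh m g a b ^ 2"
      by simp
    also have "\<dots> = walsh m g a b ^ 2 * (\<Sum>u\<in>UNIV. chi m (b * u) * autocorrelation m g a u)"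
      by (subst (2) walsh_square) simp
    finally show "walsh m g a b ^ 4 =
        (\<Sum>u\<in>UNIV. autocorrelation m g a u * (walsh m g a b ^ 2 * chi m (b * u)))"
      by (simp add: sum_distrib_left mult_ac)
  qed
  also have "\<dots> = (\<Sum>u\<in>UNIV. autocorrelation m g a u * (\<Sum>b\<in>UNIV. walsh m g a b ^ 2 * chi m (b * u)))"
    by (subst sum.swap) (simp add: sum_distrib_left)
  also have "\<dots> = 2 ^ m * (\<Sum>u\<in>UNIV. autocorrelation m g a u ^ 2)"
    by (simp only: sum_walsh_square_chi) (simp add: sum_distrib_left power2_eq_square mult_ac)
  finally show ?thesis .
qed

lemma sum_autocorrelation_square:
  "(\<Sum>a\<in>UNIV. autocorrelation m g a u ^ 2) =
    2 ^ m * (\<Sum>x\<in>UNIV. int (card {y. g x + g (x + u) = g y + g (y + u)}))"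
proof -
  have "(\<Sum>a\<in>UNIV. autocorrelation m g a u ^ 2) =
      (\<Sum>a\<in>UNIV. \<Sum>x\<in>UNIV. \<Sum>y\<in>UNIV. chi m (a * (g x + g (x + u) + (g y + g (y + u)))))"
    unfolding autocorrelation_def power2_eq_square sum_product
    by (intro sum.cong refl) (simp add: chi_add distrib_left)
  also have "\<dots> = (\<Sum>x\<in>UNIV. \<Sum>y\<in>UNIV. \<Sum>a\<in>UNIV. chi m (a * (g x + g (x + u) + (g y + g (y + u)))))"
    by (subst sum.swap) (intro sum.cong refl sum.swap)
  also have "\<dots> = (\<Sum>x\<in>UNIV. \<Sum>y\<in>UNIV. 2 ^ m * of_bool (g x + g (x + u) = g y + g (y + u)))"
    by (intro sum.cong refl) (simp add: sum_chi_mult add_eq_0_iff_eq)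
  finally show ?thesis
    by (simp add: sum_distrib_left mult.commute)
qed

lemma sum_split_zero: "(\<Sum>a\<in>UNIV. f a) = f 0 + (\<Sum>a\<in>UNIV - {0::'a}. (f a :: int))"
  by (simp add: sum.remove[of UNIV 0])

lemma sum_walsh_zero_left_chi:
  "(\<Sum>b\<in>UNIV. F (walsh m g 0 b) * chi m (b * u)) = F (2 ^ m) + F 0 * ((if u = 0 then 2 ^ m else 0) - 1)"
proof -
  have "(\<Sum>b\<in>UNIV - {0}. F (walsh m g 0 b) * chi m (b * u)) = F 0 * ((\<Sum>b\<in>UNIV. chi m (b * u)) - 1)"
    by (subst sum_split_zero[of "\<lambda>b. chi m (b * u)"]) (simp add: walsh_zero_left sum_distrib_left)
  then show ?thesis
    by (subst sum_split_zero) (simp add: walsh_zero_left sum_chi_mult)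
qed

lemma sum_chi_mult_nonzero:
  "(\<Sum>a\<in>UNIV - {0}. chi m (a * z)) = (if z = (0::'a) then 2 ^ m - 1 else -1)"
  using sum_split_zero[of "\<lambda>a. chi m (a * z)"] by (simp add: sum_chi_mult split: if_splits)

lemma sum_trivial_collisions:
  "(\<Sum>u\<in>UNIV. \<Sum>x\<in>UNIV. int (card {y. u = 0 \<or> y = x \<or> y = x + (u::'a)})) =
    3 * 2 ^ m * 2 ^ m - 2 * 2 ^ m"
proof -
  have inner: "card {y. u = 0 \<or> y = x \<or> y = x + u} = (if u = 0 then 2 ^ m else 2)" for u x :: 'a
  proof (cases "u = 0")
    case False
    then have "{y. u = 0 \<or> y = x \<or> y = x + u} = {x, x + u}" and "x \<noteq> x + u"
      by auto
    then show ?thesis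
      using False by simp
  qed (simp add: card_UNIV)
  have "(\<Sum>u\<in>UNIV. \<Sum>x\<in>UNIV. int (card {y. u = 0 \<or> y = x \<or> y = x + (u::'a)})) =
      (\<Sum>u\<in>UNIV. if u = (0::'a) then 2 ^ m * 2 ^ m else 2 * 2 ^ m)"
    by (intro sum.cong refl) (simp add: inner card_UNIV)
  also have "\<dots> = 2 ^ m * 2 ^ m + (2 ^ m - 1) * (2 * 2 ^ m)"
    by (subst sum_split_zero) (simp add: card_UNIV)
  finally show ?thesis
    by (simp add: algebra_simps)
qed

end

section \<open>Almost bent functions are almost perfect nonlinear\<close>

locale almost_bent_function = binary_field_function +
  assumes odd_m: "odd m" and almost_bent: "almost_bent m g"
begin

definition walsh_level :: int where
  "walsh_level = 2 ^ ((m + 1) div 2)"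

lemma walsh_cases:
  assumes "a \<noteq> 0"
  shows "walsh m g a b = 0 \<or> walsh m g a b = walsh_level \<or> walsh m g a b = - walsh_level"
  using almost_bent assms unfolding almost_bent_def walsh_def chi_def walsh_level_def by auto

lemma walsh_level_pos: "0 < walsh_level"
  by (simp add: walsh_level_def)

lemma walsh_level_square: "walsh_level * walsh_level = 2 * 2 ^ m"
proof -
  have "(m + 1) div 2 + (m + 1) div 2 = Suc m"
    using odd_m by presburger
  then show ?thesis
    unfolding walsh_level_def by (metis power_add power_Suc)
qed

lemma sum_walsh_fourth_nonzero:
  assumes "a \<noteq> 0"
  shows "(\<Sum>b\<in>UNIV. walsh m g a b ^ 4) = 2 * 2 ^ m * (2 ^ m * 2 ^ m)"
proof -
  have "walsh m g a b ^ 4 = (walsh_level * walsh_level) * walsh m g a b ^ 2" for b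
    using walsh_cases[OF assms, of b] by (auto simp: power2_eq_square power4_eq_xxxx)
  then show ?thesis
    by (simp add: sum_distrib_left[symmetric] parseval walsh_level_square)
qed

text \<open>The fourth moment of the Walsh spectrum, counted once through the autocorrelations and once
  through the Walsh values of an almost bent function, shows that the derivative equations
  \<open>g x + g (x + u) = g y + g (y + u)\<close> have no solutions besides the trivial ones.\<close>

lemma sum_collisions:
  "(\<Sum>u\<in>UNIV. \<Sum>x\<in>UNIV. int (card {y. g x + g (x + u) = g y + g (y + u)})) =
    3 * 2 ^ m * 2 ^ m - 2 * 2 ^ m"
    (is "?S = _")
proof -
  define n :: int where "n = 2 ^ m"
  have "(\<Sum>a\<in>UNIV. \<Sum>b\<in>UNIV. walsh m g a b ^ 4) = n * (\<Sum>a\<in>UNIV. \<Sum>u\<in>UNIV. autocorrelation m g a u ^ 2)"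
    by (simp add: sum_walsh_fourth n_def sum_distrib_left)
  also have "\<dots> = n * (\<Sum>u\<in>UNIV. \<Sum>a\<in>UNIV. autocorrelation m g a u ^ 2)"
    by (subst sum.swap) (rule refl)
  also have "\<dots> = n * n * ?S"
    by (simp add: sum_autocorrelation_square n_def sum_distrib_left mult.assoc)
  finally have via_collisions: "(\<Sum>a\<in>UNIV. \<Sum>b\<in>UNIV. walsh m g a b ^ 4) = n * n * ?S" .
  have "walsh m g 0 b ^ 4 = (if b = 0 then n ^ 4 else 0)" for b
    by (simp add: walsh_zero_left n_def)
  then have "(\<Sum>a\<in>UNIV. \<Sum>b\<in>UNIV. walsh m g a b ^ 4) = n ^ 4 + (n - 1) * (2 * n * (n * n))"
    by (subst sum_split_zero[of "\<lambda>a. \<Sum>b\<in>UNIV. walsh m g a b ^ 4"])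
      (simp add: sum_walsh_fourth_nonzero card_UNIV n_def)
  with via_collisions have "n * n * ?S = n * n * (3 * n * n - 2 * n)"
    by (simp add: algebra_simps power4_eq_xxxx)
  then show ?thesis
    by (simp add: n_def)
qed

theorem almost_perfect_nonlinear:
  assumes "g x + g (x + u) = g y + g (y + u)"
  shows "u = 0 \<or> y = x \<or> y = x + u"
proof -
  let ?triv = "\<lambda>u x. {y. u = 0 \<or> y = x \<or> y = x + (u::'a)}"
  let ?coll = "\<lambda>u x. {y. g x + g (x + u) = g y + g (y + u)}"
  have subset: "?triv u x \<subseteq> ?coll u x" for u x
  proof
    fix y
    assume "y \<in> ?triv u x"
    then consider "u = 0" | "y = x" | "y = x + u"
      by blast
    then show "y \<in> ?coll u x"
      by cases (simp_all add: add.assoc add.commute)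
  qed
  have le: "card (?triv u x) \<le> card (?coll u x)" for u x
    using card_mono[OF _ subset[of u x]] by simp
  have "(\<Sum>u\<in>UNIV. \<Sum>x\<in>UNIV. int (card (?triv u x))) = (\<Sum>u\<in>UNIV. \<Sum>x\<in>UNIV. int (card (?coll u x)))"
    by (simp only: sum_trivial_collisions sum_collisions)
  then have "(\<Sum>x\<in>UNIV. int (card (?triv u x))) = (\<Sum>x\<in>UNIV. int (card (?coll u x)))"
    by (rule sum_mono_inv) (auto intro!: sum_mono simp: le)
  then have "int (card (?triv u x)) = int (card (?coll u x))"
    by (rule sum_mono_inv) (auto simp: le)
  then have eq: "?triv u x = ?coll u x"
    using subset by (intro card_subset_eq) auto
  have "y \<in> ?coll u x"
    using assms by simp
  then have "y \<in> ?triv u x"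
    unfolding eq .
  then show ?thesis
    by simp
qed

lemma derivative_solutions:
  assumes "x \<noteq> y"
  shows "{z. g z + g (z + (x + y)) = g x + g y} = {x, y}"
proof
  show "{z. g z + g (z + (x + y)) = g x + g y} \<subseteq> {x, y}"
  proof
    fix z
    assume "z \<in> {z. g z + g (z + (x + y)) = g x + g y}"
    then have "g z + g (z + (x + y)) = g x + g (x + (x + y))"
      by simp
    then have "x + y = 0 \<or> x = z \<or> x = z + (x + y)"
      by (rule almost_perfect_nonlinear)
    then show "z \<in> {x, y}"
      using assms by (auto simp: add_eq_0_iff_eq add.left_commute)
  qed
  show "{x, y} \<subseteq> {z. g z + g (z + (x + y)) = g x + g y}"
    by (simp add: add.commute add.left_commute)
qed

lemma value_of_sum_three_ne:
  assumes "u \<noteq> v" "u \<noteq> w" "v \<noteq> w"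
  shows "g (u + v + w) \<noteq> g u + g v + g w"
proof
  assume "g (u + v + w) = g u + g v + g w"
  then have "g u + g (u + (u + v)) = g w + g (w + (u + v))"
    by (simp add: add.commute add.left_commute)
  then have "u + v = 0 \<or> w = u \<or> w = u + (u + v)"
    by (rule almost_perfect_nonlinear)
  then show False
    using assms by (auto simp: add_eq_0_iff_eq)
qed

text \<open>On the Walsh values \<open>0, \<plusminus>walsh_level\<close> a function that is even is affine in \<open>W\<^sup>2\<close>, and
  one that is odd and vanishes at 0 is linear in \<open>W\<close>. Character sums weighted by such functions
  therefore reduce to the autocorrelation and to Walsh inversion.\<close>

lemma walsh_even_function:
  fixes F :: "int \<Rightarrow> int"
  assumes "F (- walsh_level) = F walsh_level" and "a \<noteq> 0"
  shows "2 * 2 ^ m * F (walsh m g a b) = 2 * 2 ^ m * F 0 + (F walsh_level - F 0) * walsh m g a b ^ 2"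
  using walsh_cases[OF assms(2), of b] walsh_level_square assms(1)
  by (auto simp: power2_eq_square algebra_simps)

lemma walsh_odd_function:
  fixes H :: "int \<Rightarrow> int"
  assumes "H (- walsh_level) = - H walsh_level" and "H 0 = 0" and "a \<noteq> 0"
  shows "walsh_level * H (walsh m g a b) = H walsh_level * walsh m g a b"
  using walsh_cases[OF assms(3), of b] assms(1,2) by auto

lemma sum_walsh_even_chi:
  assumes F: "F (- walsh_level) = F walsh_level" and "a \<noteq> 0"
  shows "2 * (\<Sum>b\<in>UNIV. F (walsh m g a b) * chi m (a * G + b * u)) =
    2 * F 0 * chi m (a * G) * (if u = 0 then 2 ^ m else 0)
      + (F walsh_level - F 0) * chi m (a * G) * autocorrelation m g a u"
proof -
  have "2 ^ m * (2 * (\<Sum>b\<in>UNIV. F (walsh m g a b) * chi m (a * G + b * u))) =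
      (\<Sum>b\<in>UNIV. (2 * 2 ^ m * F (walsh m g a b)) * (chi m (a * G) * chi m (b * u)))"
    by (simp add: sum_distrib_left chi_add mult_ac)
  also have "\<dots> = (\<Sum>b\<in>UNIV. 2 * 2 ^ m * F 0 * chi m (a * G) * chi m (b * u)
      + (F walsh_level - F 0) * chi m (a * G) * (walsh m g a b ^ 2 * chi m (b * u)))"
    by (simp only: walsh_even_function[OF assms]) (simp add: algebra_simps)
  also have "\<dots> = 2 * 2 ^ m * F 0 * chi m (a * G) * (\<Sum>b\<in>UNIV. chi m (b * u))
      + (F walsh_level - F 0) * chi m (a * G) * (\<Sum>b\<in>UNIV. walsh m g a b ^ 2 * chi m (b * u))"
    by (simp only: sum.distrib sum_distrib_left)
  also have "\<dots> = 2 ^ m * (2 * F 0 * chi m (a * G) * (if u = 0 then 2 ^ m else 0)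
      + (F walsh_level - F 0) * chi m (a * G) * autocorrelation m g a u)"
    by (simp only: sum_chi_mult sum_walsh_square_chi) (simp add: algebra_simps)
  finally show ?thesis
    by simp
qed

lemma sum_walsh_odd_chi:
  assumes "H (- walsh_level) = - H walsh_level" and "H 0 = 0" and "a \<noteq> 0"
  shows "walsh_level * (\<Sum>b\<in>UNIV. H (walsh m g a b) * chi m (a * G + b * u)) =
    H walsh_level * 2 ^ m * chi m (a * (G + g u))"
proof -
  have "walsh_level * (\<Sum>b\<in>UNIV. H (walsh m g a b) * chi m (a * G + b * u)) =
      (\<Sum>b\<in>UNIV. (walsh_level * H (walsh m g a b)) * (chi m (a * G) * chi m (b * u)))"
    by (simp add: sum_distrib_left chi_add mult_ac)
  also have "\<dots> = H walsh_level * chi m (a * G) * (\<Sum>b\<in>UNIV. walsh m g a b * chi m (b * u))"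
    by (simp only: walsh_odd_function[OF assms]) (simp add: sum_distrib_left mult_ac)
  also have "\<dots> = H walsh_level * 2 ^ m * chi m (a * (G + g u))"
    by (simp add: walsh_inversion chi_add distrib_left)
  finally show ?thesis .
qed

lemma sum_chi_autocorrelation_pair:
  assumes "x \<noteq> y"
  shows "(\<Sum>a\<in>UNIV - {0}. chi m (a * (g x + g y)) * autocorrelation m g a (x + y)) = 2 ^ m"
proof -
  have inner: "(\<Sum>a\<in>UNIV. chi m (a * (g x + g y + (g z + g (z + (x + y)))))) =
      (if z \<in> {x, y} then 2 ^ m else 0)" for z
  proof -
    have "z \<in> {x, y} \<longleftrightarrow> g z + g (z + (x + y)) = g x + g y"
      by (simp only: derivative_solutions[OF assms, symmetric] mem_Collect_eq)
    then show ?thesis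
      by (simp only: sum_chi_mult add_eq_0_iff_eq) auto
  qed
  have "{z. z = x \<or> z = y} = {x, y}"
    by auto
  then have "(\<Sum>z\<in>UNIV. \<Sum>a\<in>UNIV. chi m (a * (g x + g y + (g z + g (z + (x + y)))))) = 2 * 2 ^ m"
    using assms by (simp add: inner sum.If_cases)
  moreover have "(\<Sum>z\<in>UNIV. \<Sum>a\<in>UNIV. chi m (a * (g x + g y + (g z + g (z + (x + y)))))) =
      (\<Sum>a\<in>UNIV. chi m (a * (g x + g y)) * autocorrelation m g a (x + y))"
    unfolding autocorrelation_def sum_distrib_left
    by (subst sum.swap) (simp only: distrib_left chi_add)
  ultimately show ?thesis
    by (simp add: sum_split_zero[of "\<lambda>a. chi m (a * (g x + g y)) * autocorrelation m g a (x + y)"]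
        autocorrelation_zero_left)
qed

lemma sum_walsh_even_pair:
  assumes F: "F (- walsh_level) = F walsh_level" and "x \<noteq> y"
  shows "2 * (\<Sum>a\<in>UNIV. \<Sum>b\<in>UNIV. F (walsh m g a b) * chi m (a * (g x + g y) + b * (x + y))) =
    2 * (F (2 ^ m) - F 0) + (F walsh_level - F 0) * 2 ^ m"
proof -
  have "x + y \<noteq> 0"
    using assms(2) by (simp add: add_eq_0_iff_eq)
  then have nonzero: "2 * (\<Sum>b\<in>UNIV. F (walsh m g a b) * chi m (a * (g x + g y) + b * (x + y))) =
      (F walsh_level - F 0) * (chi m (a * (g x + g y)) * autocorrelation m g a (x + y))" if "a \<noteq> 0" for a
    using sum_walsh_even_chi[OF F that] by simp
  have "2 * (\<Sum>a\<in>UNIV - {0}. \<Sum>b\<in>UNIV. F (walsh m g a b) * chi m (a * (g x + g y) + b * (x + y))) =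
      (\<Sum>a\<in>UNIV - {0}. (F walsh_level - F 0) * (chi m (a * (g x + g y)) * autocorrelation m g a (x + y)))"
    unfolding sum_distrib_left[of _ _ "UNIV - {0}"] by (intro sum.cong refl) (simp add: nonzero)
  also have "\<dots> = (F walsh_level - F 0) * 2 ^ m"
    by (simp only: sum_distrib_left[symmetric] sum_chi_autocorrelation_pair[OF assms(2)])
  finally show ?thesis
    using \<open>x + y \<noteq> 0\<close> sum_walsh_zero_left_chi[of F "x + y"]
    by (subst sum_split_zero) (simp add: algebra_simps)
qed

lemma sum_walsh_odd_triple:
  assumes H: "H (- walsh_level) = - H walsh_level" "H 0 = 0"
    and distinct: "u \<noteq> v" "u \<noteq> w" "v \<noteq> w"
  shows "walsh_level * (\<Sum>a\<in>UNIV. \<Sum>b\<in>UNIV.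
      H (walsh m g a b) * chi m (a * (g u + g v + g w) + b * (u + v + w))) =
    walsh_level * H (2 ^ m) - H walsh_level * 2 ^ m"
proof -
  have "g u + g v + g w + g (u + v + w) \<noteq> 0"
    using value_of_sum_three_ne[OF distinct] by (simp add: add_eq_0_iff_eq)
  have "walsh_level * (\<Sum>a\<in>UNIV - {0}. \<Sum>b\<in>UNIV.
      H (walsh m g a b) * chi m (a * (g u + g v + g w) + b * (u + v + w))) =
      (\<Sum>a\<in>UNIV - {0}. H walsh_level * 2 ^ m * chi m (a * (g u + g v + g w + g (u + v + w))))"
    unfolding sum_distrib_left[of _ _ "UNIV - {0}"] by (intro sum.cong refl) (simp add: sum_walsh_odd_chi[OF H])
  also have "\<dots> = - (H walsh_level * 2 ^ m)"
    using \<open>g u + g v + g w + g (u + v + w) \<noteq> 0\<close>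
    by (simp only: sum_distrib_left[symmetric] sum_chi_mult_nonzero) simp
  finally show ?thesis
    using sum_walsh_zero_left_chi[of H "u + v + w"] H
    by (subst sum_split_zero) (simp add: algebra_simps)
qed

end

section \<open>Binary linear codes and duality\<close>

definition word_add :: "('i \<Rightarrow> bool) \<Rightarrow> ('i \<Rightarrow> bool) \<Rightarrow> 'i \<Rightarrow> bool" where
  "word_add c d = (\<lambda>i. c i \<noteq> d i)"

definition overlap :: "'i set \<Rightarrow> ('i \<Rightarrow> bool) \<Rightarrow> ('i \<Rightarrow> bool) \<Rightarrow> nat" where
  "overlap I c d = card {i\<in>I. c i \<and> d i}"

definition binary_linear_code :: "'i set \<Rightarrow> ('i \<Rightarrow> bool) set \<Rightarrow> bool" where
  "binary_linear_code I C \<longleftrightarrow>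
     C \<subseteq> words I \<and> (\<lambda>_. False) \<in> C \<and> (\<forall>c\<in>C. \<forall>d\<in>C. word_add c d \<in> C)"

lemma word_add_cancel [simp]: "word_add (word_add c d) d = c"
  by (auto simp: word_add_def)

lemma word_add_in_words: "c \<in> words I \<Longrightarrow> d \<in> words I \<Longrightarrow> word_add c d \<in> words I"
  by (simp add: word_add_def words_def)

lemma finite_words: "finite I \<Longrightarrow> finite (words I)"
proof -
  assume "finite I"
  have "words I \<subseteq> (\<lambda>S i. i \<in> S) ` Pow I"
  proof
    fix c
    assume "c \<in> words I"
    then have "c = (\<lambda>i. i \<in> {i\<in>I. c i})"
      by (auto simp: words_def)
    then show "c \<in> (\<lambda>S i. i \<in> S) ` Pow I"
      by blast
  qed
  then show ?thesis
    using \<open>finite I\<close> by (meson finite_Pow_iff finite_imageI finite_subset)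
qed

lemma overlap_commute: "overlap I c d = overlap I d c"
  unfolding overlap_def by (simp add: conj_commute)

lemma dual_code_subset_words: "dual_code I C \<subseteq> words I"
  by (auto simp: dual_code_def)

lemma dual_code_iff:
  "d \<in> dual_code I C \<longleftrightarrow> d \<in> words I \<and> (\<forall>c\<in>C. even (overlap I c d))"
  by (simp add: dual_code_def overlap_def)

lemma even_overlap_word_add:
  assumes "finite I"
  shows "even (overlap I c (word_add d e)) \<longleftrightarrow> (even (overlap I c d) \<longleftrightarrow> even (overlap I c e))"
proof -
  define both where "both = {i\<in>I. c i \<and> d i \<and> e i}"
  define only_d where "only_d = {i\<in>I. c i \<and> d i \<and> \<not> e i}"
  define only_e where "only_e = {i\<in>I. c i \<and> \<not> d i \<and> e i}"
  have fin: "finite both" "finite only_d" "finite only_e"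
    using assms by (simp_all add: both_def only_d_def only_e_def)
  have "{i\<in>I. c i \<and> d i} = both \<union> only_d" "{i\<in>I. c i \<and> e i} = both \<union> only_e"
    "{i\<in>I. c i \<and> word_add d e i} = only_d \<union> only_e"
    by (auto simp: both_def only_d_def only_e_def word_add_def)
  moreover have "both \<inter> only_d = {}" "both \<inter> only_e = {}" "only_d \<inter> only_e = {}"
    by (auto simp: both_def only_d_def only_e_def)
  ultimately have "overlap I c d = card both + card only_d" "overlap I c e = card both + card only_e"
    "overlap I c (word_add d e) = card only_d + card only_e"
    using fin by (simp_all add: overlap_def card_Un_disjoint)
  then show ?thesis
    by auto
qed

lemma overlap_sign_word_add:
  "finite I \<Longrightarrow> (-1::int) ^ overlap I c (word_add d e) = (-1) ^ overlap I c d * (-1) ^ overlap I c e"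
  using even_overlap_word_add[of I c d e] by (auto simp: minus_one_power_iff)

lemma sum_overlap_sign_words:
  assumes "finite I" and "e \<in> words I"
  shows "(\<Sum>d\<in>words I. (-1::int) ^ overlap I d e) = (if e = (\<lambda>_. False) then int (card (words I)) else 0)"
proof (cases "e = (\<lambda>_. False)")
  case True
  then show ?thesis
    by (simp add: overlap_def)
next
  case False
  then obtain j where "e j"
    by auto
  with assms(2) have "j \<in> I"
    by (auto simp: words_def)
  define \<delta> where "\<delta> = (\<lambda>i. i = j)"
  have "\<delta> \<in> words I"
    using \<open>j \<in> I\<close> by (auto simp: \<delta>_def words_def)
  then have "bij_betw (\<lambda>d. word_add d \<delta>) (words I) (words I)"
    by (intro bij_betw_byWitness[where f'="\<lambda>d. word_add d \<delta>"]) (auto intro: word_add_in_words)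
  then have reindex:
      "(\<Sum>d\<in>words I. (-1::int) ^ overlap I (word_add d \<delta>) e) = (\<Sum>d\<in>words I. (-1) ^ overlap I d e)"
    by (rule sum.reindex_bij_betw)
  have "{i\<in>I. \<delta> i \<and> e i} = {j}"
    using \<open>j \<in> I\<close> \<open>e j\<close> by (auto simp: \<delta>_def)
  then have "overlap I \<delta> e = 1"
    by (simp add: overlap_def)
  then have "(-1::int) ^ overlap I (word_add d \<delta>) e = - ((-1) ^ overlap I d e)" for d
    using overlap_sign_word_add[OF assms(1), of e d \<delta>] by (simp add: overlap_commute)
  then show ?thesis
    using reindex False by (simp add: sum_negf)
qed

lemma sum_overlap_sign_code:
  assumes "finite I" and "binary_linear_code I C" and "d \<in> words I"
  shows "(\<Sum>c\<in>C. (-1::int) ^ overlap I c d) = (if d \<in> dual_code I C then int (card C) else 0)"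
proof (cases "d \<in> dual_code I C")
  case False
  then obtain c\<^sub>0 where "c\<^sub>0 \<in> C" and "odd (overlap I c\<^sub>0 d)"
    using assms(3) by (auto simp: dual_code_iff)
  then have "bij_betw (\<lambda>c. word_add c c\<^sub>0) C C"
    using assms(2) by (intro bij_betw_byWitness[where f'="\<lambda>c. word_add c c\<^sub>0"])
      (auto simp: binary_linear_code_def)
  then have "(\<Sum>c\<in>C. (-1::int) ^ overlap I (word_add c c\<^sub>0) d) = (\<Sum>c\<in>C. (-1) ^ overlap I c d)"
    by (rule sum.reindex_bij_betw)
  moreover have "(-1::int) ^ overlap I (word_add c c\<^sub>0) d = - ((-1) ^ overlap I c d)" for c
    using overlap_sign_word_add[OF assms(1), of d c c\<^sub>0] \<open>odd (overlap I c\<^sub>0 d)\<close>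
    by (simp add: overlap_commute)
  ultimately show ?thesis
    using False by (simp add: sum_negf)
qed (simp add: dual_code_iff)

lemma card_mult_card_dual_code:
  assumes "finite I" and "binary_linear_code I C"
  shows "card C * card (dual_code I C) = card (words I)"
proof -
  have "C \<subseteq> words I" and "(\<lambda>_. False) \<in> C"
    using assms(2) by (auto simp: binary_linear_code_def)
  moreover have "finite (words I)"
    using assms(1) by (rule finite_words)
  ultimately have "finite C"
    by (auto intro: finite_subset)
  have "(\<Sum>d\<in>words I. \<Sum>c\<in>C. (-1::int) ^ overlap I c d) = (\<Sum>c\<in>C. \<Sum>d\<in>words I. (-1) ^ overlap I d c)"
    by (subst sum.swap) (simp add: overlap_commute)
  also have "\<dots> = (\<Sum>c\<in>C. if c = (\<lambda>_. False) then int (card (words I)) else 0)"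
    using \<open>C \<subseteq> words I\<close> by (intro sum.cong refl) (auto simp: sum_overlap_sign_words[OF assms(1)])
  also have "\<dots> = int (card (words I))"
    using \<open>(\<lambda>_. False) \<in> C\<close> \<open>finite C\<close> by simp
  finally have by_words: "(\<Sum>d\<in>words I. \<Sum>c\<in>C. (-1::int) ^ overlap I c d) = int (card (words I))" .
  have "(\<Sum>d\<in>words I. \<Sum>c\<in>C. (-1::int) ^ overlap I c d) =
      (\<Sum>d\<in>words I. if d \<in> dual_code I C then int (card C) else 0)"
    by (intro sum.cong refl) (simp add: sum_overlap_sign_code[OF assms])
  also have "\<dots> = int (card (dual_code I C)) * int (card C)"
    using dual_code_subset_words[of I C] \<open>finite (words I)\<close>
    by (simp add: sum.If_cases Int_absorb1)
  finally show ?thesis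
    using by_words by (metis mult.commute of_nat_eq_iff of_nat_mult)
qed

lemma binary_linear_code_dual_code:
  assumes "finite I"
  shows "binary_linear_code I (dual_code I C)"
  unfolding binary_linear_code_def
proof (intro conjI ballI)
  fix d e
  assume "d \<in> dual_code I C" and "e \<in> dual_code I C"
  then show "word_add d e \<in> dual_code I C"
    by (auto simp: dual_code_iff even_overlap_word_add[OF assms] intro: word_add_in_words)
qed (auto simp: dual_code_iff words_def overlap_def dual_code_subset_words)

theorem dual_dual_code:
  assumes "finite I" and "binary_linear_code I C"
  shows "dual_code I (dual_code I C) = C"
proof -
  have subset: "C \<subseteq> dual_code I (dual_code I C)"
  proof
    fix c
    assume "c \<in> C"
    then have "even (overlap I d c)" if "d \<in> dual_code I C" for d
      using that by (simp add: dual_code_iff overlap_commute[of I d c])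
    moreover have "c \<in> words I"
      using \<open>c \<in> C\<close> assms(2) by (auto simp: binary_linear_code_def)
    ultimately show "c \<in> dual_code I (dual_code I C)"
      by (simp add: dual_code_iff)
  qed
  have "finite (dual_code I (dual_code I C))"
    using finite_words[OF assms(1)] dual_code_subset_words by (rule finite_subset[rotated])
  moreover have "card (words I) \<noteq> 0"
    using finite_words[OF assms(1)] by (auto simp: words_def)
  with card_mult_card_dual_code[OF assms]
    card_mult_card_dual_code[OF assms(1) binary_linear_code_dual_code[OF assms(1)]]
  have "card C = card (dual_code I (dual_code I C))"
    by (metis mult.commute mult_right_cancel mult_0_right)
  ultimately show ?thesis
    using card_subset_eq[OF _ subset] by simp
qed

lemma extend_code_iff:
  assumes "finite I" and "e \<notin> I" and "C \<subseteq> words I"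
  shows "w \<in> extend_code I e C \<longleftrightarrow> w(e := False) \<in> C \<and> even (card {i\<in>insert e I. w i})"
proof -
  have parity: "card {i\<in>insert e I. (c(e := b)) i} = card {i\<in>I. c i} + of_bool b" for c b
  proof -
    have "{i\<in>insert e I. (c(e := b)) i} = (if b then insert e {i\<in>I. c i} else {i\<in>I. c i})"
      using assms(2) by auto
    then show ?thesis
      using assms(1,2) by simp
  qed
  show ?thesis
  proof
    assume "w \<in> extend_code I e C"
    then obtain c where "c \<in> C" and w: "w = c(e := odd (card {i\<in>I. c i}))"
      unfolding extend_code_def by auto
    moreover have "c e = False"
      using \<open>c \<in> C\<close> assms(2,3) by (auto simp: words_def)
    ultimately show "w(e := False) \<in> C \<and> even (card {i\<in>insert e I. w i})"
      using parity[of c] by (simp add: fun_upd_idem)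
  next
    assume *: "w(e := False) \<in> C \<and> even (card {i\<in>insert e I. w i})"
    have "{i\<in>I. (w(e := False)) i} = {i\<in>I. w i}"
      using assms(2) by auto
    then have we: "w e = odd (card {i\<in>I. (w(e := False)) i})"
      using * parity[of "w(e := False)" "w e"] by simp
    have "w = (w(e := False))(e := odd (card {i\<in>I. (w(e := False)) i}))"
      unfolding fun_upd_upd by (simp only: we[symmetric] fun_upd_triv)
    then show "w \<in> extend_code I e C"
      unfolding extend_code_def using * by blast
  qed
qed

lemma card_blocks_choose:
  assumes "finite P" and blocks: "\<forall>b\<in>B. b \<subseteq> P \<and> card b = k"
    and count: "\<And>T. T \<subseteq> P \<Longrightarrow> card T = t \<Longrightarrow> card {b\<in>B. T \<subseteq> b} = c"
  shows "c * (card P choose t) = card B * (k choose t)"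
proof -
  define Ts where "Ts = {T. T \<subseteq> P \<and> card T = t}"
  have "finite B" and "finite Ts"
    using assms(1) blocks by (auto simp: Ts_def intro: finite_subset[of _ "Pow P"])
  have "c * (card P choose t) = (\<Sum>T\<in>Ts. card {b\<in>B. T \<subseteq> b})"
    using count n_subsets[OF assms(1), of t] by (simp add: Ts_def)
  also have "\<dots> = (\<Sum>T\<in>Ts. \<Sum>b\<in>B. of_bool (T \<subseteq> b))"
    using \<open>finite B\<close> by (simp add: Int_def conj_commute)
  also have "\<dots> = (\<Sum>b\<in>B. \<Sum>T\<in>Ts. of_bool (T \<subseteq> b))"
    by (rule sum.swap)
  also have "\<dots> = (\<Sum>b\<in>B. k choose t)"
  proof (rule sum.cong[OF refl])
    fix b
    assume "b \<in> B"
    then have "Ts \<inter> {T. T \<subseteq> b} = {T. T \<subseteq> b \<and> card T = t}" and "finite b"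
      using blocks assms(1) by (auto simp: Ts_def intro: finite_subset)
    then show "(\<Sum>T\<in>Ts. of_bool (T \<subseteq> b)) = k choose t"
      using \<open>finite Ts\<close> n_subsets[of b t] \<open>b \<in> B\<close> blocks by simp
  qed
  finally show ?thesis
    by simp
qed

lemma t_design_if_uniform:
  assumes "finite P" and blocks: "\<forall>b\<in>B. b \<subseteq> P \<and> card b = k" and "t \<le> card P"
    and uniform: "\<And>T T'. T \<subseteq> P \<Longrightarrow> card T = t \<Longrightarrow> T' \<subseteq> P \<Longrightarrow> card T' = t \<Longrightarrow>
      card {b\<in>B. T \<subseteq> b} = card {b\<in>B. T' \<subseteq> b}"
  shows "t_design P B t (card P) k (real (card B) * real (k choose t) / real (card P choose t))"
proof -
  obtain T\<^sub>0 where "T\<^sub>0 \<subseteq> P" and "card T\<^sub>0 = t"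
    using obtain_subset_with_card_n[OF \<open>t \<le> card P\<close>] by blast
  define c where "c = card {b\<in>B. T\<^sub>0 \<subseteq> b}"
  have count: "card {b\<in>B. T \<subseteq> b} = c" if "T \<subseteq> P" and "card T = t" for T
    using uniform[OF that \<open>T\<^sub>0 \<subseteq> P\<close> \<open>card T\<^sub>0 = t\<close>] by (simp add: c_def)
  have "real c * real (card P choose t) = real (card B) * real (k choose t)"
    using card_blocks_choose[OF assms(1) blocks count] by (metis of_nat_mult)
  moreover have "card P choose t \<noteq> 0"
    using \<open>t \<le> card P\<close> by simp
  ultimately have "real c = real (card B) * real (k choose t) / real (card P choose t)"
    by (simp add: field_simps)
  then show ?thesis
    unfolding t_design_def using assms(1) blocks count by simp
qed

section \<open>The code \<open>D\<close> as a set of trace words\<close>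

definition bool_sign :: "bool \<Rightarrow> int" where
  "bool_sign e = (if e then -1 else 1)"

locale almost_bent_code = almost_bent_function m g for m and g :: "'a::{field,finite} \<Rightarrow> 'a" +
  fixes A :: "'a set" and r :: nat
  assumes m_ge_3: "3 \<le> m" and g_zero: "g 0 = 0"
    and subgroup_A: "additive_subgroup A" and card_A: "card A = 2 ^ r"
begin

lemma zero_in_A: "0 \<in> A"
  using subgroup_A by (simp add: additive_subgroup_def)

lemma add_in_A: "a \<in> A \<Longrightarrow> a' \<in> A \<Longrightarrow> a + a' \<in> A"
  using subgroup_A by (simp add: additive_subgroup_def)

definition params :: "('a \<times> 'a \<times> bool) set" where
  "params = A \<times> UNIV \<times> UNIV"

definition codeword :: "'a \<times> 'a \<times> bool \<Rightarrow> 'a \<Rightarrow> bool" where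
  "codeword p x = (case p of (a, b, e) \<Rightarrow> (tr m (a * g x + b * x) = 1) \<noteq> e)"

lemma codeword_apply [simp]: "codeword (a, b, e) x \<longleftrightarrow> (tr m (a * g x + b * x) = 1) \<noteq> e"
  by (simp add: codeword_def)

lemma codeword_at_zero: "codeword (a, b, e) 0 = e"
  by (simp add: g_zero)

lemma word_add_codeword:
  "word_add (codeword (a, b, e)) (codeword (a', b', e')) = codeword (a + a', b + b', e \<noteq> e')"
proof
  fix x
  have "(a + a') * g x + (b + b') * x = (a * g x + b * x) + (a' * g x + b' * x)"
    by (simp add: algebra_simps)
  then have "tr m ((a + a') * g x + (b + b') * x) = 1 \<longleftrightarrow>
      (tr m (a * g x + b * x) = 1) \<noteq> (tr m (a' * g x + b' * x) = 1)"
    by (simp only: tr_add_eq_1_iff[OF card_UNIV])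
  then show "word_add (codeword (a, b, e)) (codeword (a', b', e')) x = codeword (a + a', b + b', e \<noteq> e') x"
    by (simp add: word_add_def) blast
qed

lemma binary_linear_code_codewords: "binary_linear_code UNIV (codeword ` params)"
  unfolding binary_linear_code_def
proof (intro conjI ballI)
  have "(\<lambda>_. False) = codeword (0, 0, False)"
    by auto
  then show "(\<lambda>_. False) \<in> codeword ` params"
    using zero_in_A by (auto simp: params_def)
  fix c d
  assume "c \<in> codeword ` params" and "d \<in> codeword ` params"
  then show "word_add c d \<in> codeword ` params"
    by (auto simp: params_def word_add_codeword add_in_A)
qed (simp add: words_def)

lemma dual_codewords_iff:
  "w \<in> dual_code UNIV (codeword ` params) \<longleftrightarrow>
    even (card {x. w x}) \<and> (\<forall>a\<in>A. \<forall>b. even (card {x. codeword (a, b, False) x \<and> w x}))"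
proof
  assume "w \<in> dual_code UNIV (codeword ` params)"
  then have even: "even (card {x. codeword p x \<and> w x})" if "p \<in> params" for p
    using that by (simp add: dual_code_iff overlap_def)
  have "{x. codeword (0, 0, True) x \<and> w x} = {x. w x}"
    by simp
  then show "even (card {x. w x}) \<and> (\<forall>a\<in>A. \<forall>b. even (card {x. codeword (a, b, False) x \<and> w x}))"
    using even[of "(0, 0, True)"] even[of "(_, _, False)"] zero_in_A by (simp add: params_def)
next
  assume *: "even (card {x. w x}) \<and> (\<forall>a\<in>A. \<forall>b. even (card {x. codeword (a, b, False) x \<and> w x}))"
  have "even (card {x. codeword (a, b, e) x \<and> w x})" if "a \<in> A" for a b e
  proof (cases e)
    case True
    let ?S = "{x. codeword (a, b, False) x \<and> w x}"
    have "{x. codeword (a, b, e) x \<and> w x} = {x. w x} - ?S"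
      using True by auto
    moreover have "card ({x. w x} - ?S) = card {x. w x} - card ?S"
      by (rule card_Diff_subset) auto
    moreover have "card ?S \<le> card {x. w x}"
      by (rule card_mono) auto
    ultimately show ?thesis
      using * \<open>a \<in> A\<close> by (simp only:) auto
  qed (use * \<open>a \<in> A\<close> in simp)
  then show "w \<in> dual_code UNIV (codeword ` params)"
    by (auto simp: dual_code_iff overlap_def params_def words_def)
qed

lemma code_gA_eq: "code_gA m g A = {codeword (a, b, False) | a b. a \<in> A}"
proof -
  have "(\<lambda>x. x \<noteq> 0 \<and> tr m (a * g x + b * x) = 1) = codeword (a, b, False)" for a b
    by (auto simp: g_zero)
  then show ?thesis
    by (simp add: code_gA_def)
qed

lemma extended_dual_code_gA:
  "extend_code (UNIV - {0}) 0 (dual_code (UNIV - {0}) (code_gA m g A)) = dual_code UNIV (codeword ` params)"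
proof (intro set_eqI)
  fix w :: "'a \<Rightarrow> bool"
  have "{i\<in>UNIV - {0}. codeword (a, b, False) i \<and> (w(0 := False)) i} = {x. codeword (a, b, False) x \<and> w x}"
    for a b
    using codeword_at_zero[of a b False] by auto
  then have "overlap (UNIV - {0}) (codeword (a, b, False)) (w(0 := False)) =
      card {x. codeword (a, b, False) x \<and> w x}" for a b
    by (simp add: overlap_def)
  moreover have "w(0 := False) \<in> words (UNIV - {0})"
    by (simp add: words_def)
  ultimately have "w(0 := False) \<in> dual_code (UNIV - {0}) (code_gA m g A) \<longleftrightarrow>
      (\<forall>a\<in>A. \<forall>b. even (card {x. codeword (a, b, False) x \<and> w x}))"
    unfolding dual_code_iff code_gA_eq by fastforce
  moreover have "insert 0 (UNIV - {0}) = (UNIV::'a set)"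
    by auto
  ultimately show "w \<in> extend_code (UNIV - {0}) 0 (dual_code (UNIV - {0}) (code_gA m g A)) \<longleftrightarrow>
      w \<in> dual_code UNIV (codeword ` params)"
    by (simp add: extend_code_iff dual_code_subset_words dual_codewords_iff conj_commute)
qed

theorem code_D_eq: "code_D m g A = codeword ` params"
  unfolding code_D_def extended_dual_code_gA
  by (rule dual_dual_code[OF finite binary_linear_code_codewords])

lemma walsh_level_less: "walsh_level < 2 ^ m"
  using m_ge_3 unfolding walsh_level_def by (intro power_strict_increasing) auto

lemma codeword_eq_zero_iff: "codeword (a, b, False) = (\<lambda>_. False) \<longleftrightarrow> a = 0 \<and> b = 0"
proof
  assume "codeword (a, b, False) = (\<lambda>_. False)"
  then have "{x. tr m (a * g x + b * x) = 1} = {}"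
    by (auto simp: fun_eq_iff)
  then have "walsh m g a b = 2 ^ m"
    by (simp add: walsh_eq_card)
  moreover have "a = 0"
  proof (rule ccontr)
    assume "a \<noteq> 0"
    then show False
      using walsh_cases[of a b] walsh_level_less walsh_level_pos \<open>walsh m g a b = 2 ^ m\<close>
      by auto
  qed
  ultimately show "a = 0 \<and> b = 0"
    by (simp add: walsh_zero_left split: if_splits)
qed auto

lemma inj_on_codeword: "inj_on codeword params"
proof (rule inj_onI)
  fix p p'
  assume "codeword p = codeword p'"
  moreover obtain a b e a' b' e' where p: "p = (a, b, e)" and p': "p' = (a', b', e')"
    by (cases p, cases p')
  ultimately have eq: "codeword (a, b, e) = codeword (a', b', e')"
    by simp
  then have "e = e'"
    by (metis codeword_at_zero)
  have "codeword (a + a', b + b', False) = word_add (codeword (a, b, e)) (codeword (a', b', e'))"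
    by (simp add: word_add_codeword \<open>e = e'\<close>)
  also have "\<dots> = (\<lambda>_. False)"
    by (simp add: eq word_add_def)
  finally show "p = p'"
    using \<open>e = e'\<close> by (simp add: p p' codeword_eq_zero_iff add_eq_0_iff_eq)
qed

lemma hweight_codeword: "2 * int (hweight (codeword (a, b, e))) = 2 ^ m - bool_sign e * walsh m g a b"
proof (cases e)
  case True
  have "supp (codeword (a, b, e)) = UNIV - {x. tr m (a * g x + b * x) = 1}"
    using True by (auto simp: supp_def)
  moreover have "card {x. tr m (a * g x + b * x) = 1} \<le> card (UNIV::'a set)"
    by (rule card_mono) auto
  ultimately have "int (hweight (codeword (a, b, e))) = 2 ^ m - int (card {x. tr m (a * g x + b * x) = 1})"
    by (simp add: hweight_def card_Diff_subset card_UNIV)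
  then show ?thesis
    using True by (simp add: walsh_eq_card bool_sign_def)
qed (simp add: hweight_def supp_def walsh_eq_card bool_sign_def)

section \<open>Counting codewords through character sums\<close>

text \<open>The codewords with parameters \<open>(a, b, False)\<close> and \<open>(a, b, True)\<close> are complementary, of
  weights \<open>(2^m \<mp> W)/2\<close> with \<open>W = walsh m g a b\<close>. Among them, \<open>weight_hits K W\<close> counts those of
  weight \<open>K\<close>, and \<open>weight_hits_signed K W\<close> counts them with sign \<open>bool_sign e\<close>.\<close>

definition weight_hits :: "int \<Rightarrow> int \<Rightarrow> int" where
  "weight_hits K w = of_bool (2 * K = 2 ^ m - w) + of_bool (2 * K = 2 ^ m + w)"

definition weight_hits_signed :: "int \<Rightarrow> int \<Rightarrow> int" where
  "weight_hits_signed K w = of_bool (2 * K = 2 ^ m - w) - of_bool (2 * K = 2 ^ m + w)"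

definition hit_sum :: "int \<Rightarrow> 'a \<Rightarrow> 'a \<Rightarrow> int" where
  "hit_sum K G U = (\<Sum>a\<in>A. \<Sum>b\<in>UNIV. weight_hits K (walsh m g a b) * chi m (a * G + b * U))"

definition signed_hit_sum :: "int \<Rightarrow> 'a \<Rightarrow> 'a \<Rightarrow> int" where
  "signed_hit_sum K G U = (\<Sum>a\<in>A. \<Sum>b\<in>UNIV. weight_hits_signed K (walsh m g a b) * chi m (a * G + b * U))"

definition codeword_count :: "nat \<Rightarrow> 'a set \<Rightarrow> nat" where
  "codeword_count k T = card {p\<in>params. hweight (codeword p) = k \<and> T \<subseteq> supp (codeword p)}"

lemma indicator_codeword: "2 * of_bool (codeword (a, b, e) x) = 1 - bool_sign e * chi m (a * g x + b * x)"
  by (cases e) (auto simp: bool_sign_def chi_eq_if)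

lemma hweight_codeword_eq_iff:
  "hweight (codeword (a, b, e)) = k \<longleftrightarrow> 2 * int k = 2 ^ m - bool_sign e * walsh m g a b"
  using hweight_codeword[of a b e] by auto

lemma sum_params: "(\<Sum>p\<in>params. f p) = (\<Sum>a\<in>A. \<Sum>b\<in>UNIV. \<Sum>e\<in>UNIV. f (a, b, e))"
  by (simp add: params_def sum.cartesian_product)

lemma int_card_params:
  "int (card {p\<in>params. Q p}) = (\<Sum>a\<in>A. \<Sum>b\<in>UNIV. \<Sum>e\<in>UNIV. of_bool (Q (a, b, e)))"
proof -
  have "(\<Sum>p\<in>params. of_bool (Q p)) = int (card (params \<inter> {p. Q p}))"
    by (rule sum_of_bool_eq) (simp_all add: params_def)
  then show ?thesis
    by (simp only: sum_params Int_def mem_Collect_eq)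
qed

lemma codeword_count_empty: "int (codeword_count k {}) = hit_sum (int k) 0 0"
  unfolding codeword_count_def int_card_params hit_sum_def
  by (intro sum.cong refl)
    (simp add: UNIV_bool hweight_codeword_eq_iff weight_hits_def bool_sign_def add.commute)

lemma codeword_count_point:
  "2 * int (codeword_count k {u}) = hit_sum (int k) 0 0 - signed_hit_sum (int k) (g u) u"
proof -
  have pointwise: "(2::int) * of_bool (hweight (codeword (a, b, e)) = k \<and> {u} \<subseteq> supp (codeword (a, b, e))) =
      of_bool (2 * int k = 2 ^ m - bool_sign e * walsh m g a b) * (1 - bool_sign e * chi m (a * g u + b * u))"
    for a b e
  proof -
    have "(2::int) * of_bool (hweight (codeword (a, b, e)) = k \<and> {u} \<subseteq> supp (codeword (a, b, e))) =
        of_bool (hweight (codeword (a, b, e)) = k) * (2 * of_bool (codeword (a, b, e) u))"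
      by (simp add: supp_def)
    then show ?thesis
      by (simp only: indicator_codeword hweight_codeword_eq_iff)
  qed
  then have "(\<Sum>e\<in>UNIV. 2 * of_bool (hweight (codeword (a, b, e)) = k \<and> {u} \<subseteq> supp (codeword (a, b, e)))) =
      weight_hits (int k) (walsh m g a b) - weight_hits_signed (int k) (walsh m g a b) * chi m (a * g u + b * u)"
    for a b
    unfolding pointwise by (simp add: UNIV_bool bool_sign_def weight_hits_def weight_hits_signed_def algebra_simps)
  then show ?thesis
    unfolding codeword_count_def int_card_params hit_sum_def signed_hit_sum_def sum_distrib_left
    by (simp add: sum_subtractf)
qed

lemma codeword_count_triple:
  "8 * int (codeword_count k {u, v, w}) =
    hit_sum (int k) 0 0 + hit_sum (int k) (g u + g v) (u + v)
    + hit_sum (int k) (g u + g w) (u + w) + hit_sum (int k) (g v + g w) (v + w)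
    - signed_hit_sum (int k) (g u) u - signed_hit_sum (int k) (g v) v - signed_hit_sum (int k) (g w) w
    - signed_hit_sum (int k) (g u + g v + g w) (u + v + w)"
proof -
  define \<chi> where "\<chi> a b x = chi m (a * g x + b * x)" for a b x
  have pair: "chi m (a * (g x + g y) + b * (x + y)) = \<chi> a b x * \<chi> a b y" for a b x y
    unfolding \<chi>_def chi_add[symmetric] by (simp add: algebra_simps)
  have triple: "chi m (a * (g x + g y + g z) + b * (x + y + z)) = \<chi> a b x * \<chi> a b y * \<chi> a b z" for a b x y z
    unfolding \<chi>_def chi_add[symmetric] by (simp add: algebra_simps)
  have pointwise: "(8::int) * of_bool (hweight (codeword (a, b, e)) = k \<and> {u, v, w} \<subseteq> supp (codeword (a, b, e))) =
      of_bool (2 * int k = 2 ^ m - bool_sign e * walsh m g a b) *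
        ((1 - bool_sign e * \<chi> a b u) * (1 - bool_sign e * \<chi> a b v) * (1 - bool_sign e * \<chi> a b w))"
    for a b e
  proof -
    have "(8::int) * of_bool (hweight (codeword (a, b, e)) = k \<and> {u, v, w} \<subseteq> supp (codeword (a, b, e))) =
        of_bool (hweight (codeword (a, b, e)) = k) *
          ((2 * of_bool (codeword (a, b, e) u)) * (2 * of_bool (codeword (a, b, e) v)) * (2 * of_bool (codeword (a, b, e) w)))"
      by (simp add: supp_def)
    then show ?thesis
      by (simp only: indicator_codeword hweight_codeword_eq_iff \<chi>_def)
  qed
  have "(\<Sum>e\<in>UNIV. 8 * of_bool (hweight (codeword (a, b, e)) = k \<and> {u, v, w} \<subseteq> supp (codeword (a, b, e)))) =
      weight_hits (int k) (walsh m g a b) * (1 + \<chi> a b u * \<chi> a b v + \<chi> a b u * \<chi> a b w + \<chi> a b v * \<chi> a b w)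
      - weight_hits_signed (int k) (walsh m g a b) * (\<chi> a b u + \<chi> a b v + \<chi> a b w + \<chi> a b u * \<chi> a b v * \<chi> a b w)"
    for a b
    unfolding pointwise by (simp add: UNIV_bool bool_sign_def weight_hits_def weight_hits_signed_def algebra_simps)
  then show ?thesis
    unfolding codeword_count_def int_card_params hit_sum_def signed_hit_sum_def sum_distrib_left pair triple
    by (simp add: \<chi>_def sum.distrib sum_subtractf ring_distribs)
qed

lemma weight_hits_uminus: "weight_hits K (- w) = weight_hits K w"
  by (simp add: weight_hits_def)

lemma weight_hits_signed_uminus: "weight_hits_signed K (- w) = - weight_hits_signed K w"
  by (simp add: weight_hits_signed_def)

lemma weight_hits_signed_zero: "weight_hits_signed K 0 = 0"
  by (simp add: weight_hits_signed_def)

lemma sum_A_split_zero: "(\<Sum>a\<in>A. f a) = f 0 + (\<Sum>a\<in>A - {0}. (f a :: int))"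
  using zero_in_A by (simp add: sum.remove)

lemma card_A_nonzero: "int (card (A - {0})) = 2 ^ r - 1"
  using card_A zero_in_A by (simp add: card_Diff_singleton)

lemma sum_A_walsh_even:
  fixes F :: "int \<Rightarrow> int"
  assumes F: "F (- walsh_level) = F walsh_level"
  shows "2 * (\<Sum>a\<in>A. \<Sum>b\<in>UNIV. F (walsh m g a b)) =
    2 * (F (2 ^ m) + (2 ^ m - 1) * F 0) + (2 ^ r - 1) * (2 * 2 ^ m * F 0 + (F walsh_level - F 0) * 2 ^ m)"
proof -
  have "2 * (\<Sum>a\<in>A - {0}. \<Sum>b\<in>UNIV. F (walsh m g a b)) =
      (\<Sum>a\<in>A - {0}. 2 * 2 ^ m * F 0 + (F walsh_level - F 0) * 2 ^ m)"
    unfolding sum_distrib_left[of _ _ "A - {0}"]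
    by (intro sum.cong refl) (use sum_walsh_even_chi[OF F, of _ 0 0] in \<open>simp add: autocorrelation_zero_right\<close>)
  also have "\<dots> = (2 ^ r - 1) * (2 * 2 ^ m * F 0 + (F walsh_level - F 0) * 2 ^ m)"
    by (simp add: card_A_nonzero)
  finally show ?thesis
    using sum_walsh_zero_left_chi[of F 0] by (subst sum_A_split_zero) (simp add: algebra_simps)
qed

lemma sum_A_walsh_odd_chi:
  fixes H :: "int \<Rightarrow> int"
  assumes H: "H (- walsh_level) = - H walsh_level" "H 0 = 0"
  shows "walsh_level * (\<Sum>a\<in>A. \<Sum>b\<in>UNIV. H (walsh m g a b) * chi m (a * g u + b * u)) =
    walsh_level * H (2 ^ m) + H walsh_level * 2 ^ m * (2 ^ r - 1)"
proof -
  have "walsh_level * (\<Sum>a\<in>A - {0}. \<Sum>b\<in>UNIV. H (walsh m g a b) * chi m (a * g u + b * u)) =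
      (\<Sum>a\<in>A - {0}. H walsh_level * 2 ^ m)"
    unfolding sum_distrib_left[of _ _ "A - {0}"]
    by (intro sum.cong refl) (use sum_walsh_odd_chi[OF H, of _ "g u" u] in simp)
  also have "\<dots> = H walsh_level * 2 ^ m * (2 ^ r - 1)"
    by (simp add: card_A_nonzero)
  finally show ?thesis
    using sum_walsh_zero_left_chi[of H u] H by (subst sum_A_split_zero) (simp add: algebra_simps)
qed

lemma signed_hit_sum_point:
  "walsh_level * signed_hit_sum K (g u) u =
    walsh_level * weight_hits_signed K (2 ^ m) + weight_hits_signed K walsh_level * 2 ^ m * (2 ^ r - 1)"
  unfolding signed_hit_sum_def
  by (rule sum_A_walsh_odd_chi) (simp_all add: weight_hits_signed_uminus weight_hits_signed_zero)

lemma hit_sum_pair: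
  assumes "A = UNIV" and "x \<noteq> y"
  shows "2 * hit_sum K (g x + g y) (x + y) =
    2 * (weight_hits K (2 ^ m) - weight_hits K 0) + (weight_hits K walsh_level - weight_hits K 0) * 2 ^ m"
  unfolding hit_sum_def
  by (subst \<open>A = UNIV\<close>) (rule sum_walsh_even_pair[where F="weight_hits K", OF weight_hits_uminus \<open>x \<noteq> y\<close>])

lemma signed_hit_sum_triple:
  assumes "A = UNIV" and "u \<noteq> v" "u \<noteq> w" "v \<noteq> w"
  shows "walsh_level * signed_hit_sum K (g u + g v + g w) (u + v + w) =
    walsh_level * weight_hits_signed K (2 ^ m) - weight_hits_signed K walsh_level * 2 ^ m"
  unfolding signed_hit_sum_def
  by (subst \<open>A = UNIV\<close>)
    (rule sum_walsh_odd_triple[where H="weight_hits_signed K", OF weight_hits_signed_uminus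
        weight_hits_signed_zero assms(2-4)])

lemma codeword_count_point_indep: "codeword_count k {u} = codeword_count k {v}"
proof -
  have "walsh_level * signed_hit_sum (int k) (g u) u = walsh_level * signed_hit_sum (int k) (g v) v"
    by (simp only: signed_hit_sum_point)
  then have "2 * int (codeword_count k {u}) = 2 * int (codeword_count k {v})"
    using walsh_level_pos by (simp add: codeword_count_point)
  then show ?thesis
    by simp
qed

lemma codeword_count_triple_indep:
  assumes "A = UNIV" and "card T = 3" and "card T' = 3"
  shows "codeword_count k T = codeword_count k T'"
proof -
  have count: "16 * walsh_level * int (codeword_count k {u, v, w}) =
      2 * walsh_level * hit_sum (int k) 0 0
      + 3 * walsh_level * (2 * (weight_hits (int k) (2 ^ m) - weight_hits (int k) 0)
          + (weight_hits (int k) walsh_level - weight_hits (int k) 0) * 2 ^ m)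
      - 6 * (walsh_level * weight_hits_signed (int k) (2 ^ m)
          + weight_hits_signed (int k) walsh_level * 2 ^ m * (2 ^ r - 1))
      - 2 * (walsh_level * weight_hits_signed (int k) (2 ^ m) - weight_hits_signed (int k) walsh_level * 2 ^ m)"
    if "u \<noteq> v" "u \<noteq> w" "v \<noteq> w" for u v w
  proof -
    have "16 * walsh_level * int (codeword_count k {u, v, w}) =
        2 * walsh_level * (8 * int (codeword_count k {u, v, w}))"
      by simp
    also have "\<dots> =
        2 * walsh_level * hit_sum (int k) 0 0 + walsh_level * (2 * hit_sum (int k) (g u + g v) (u + v))
        + walsh_level * (2 * hit_sum (int k) (g u + g w) (u + w))
        + walsh_level * (2 * hit_sum (int k) (g v + g w) (v + w))
        - 2 * (walsh_level * signed_hit_sum (int k) (g u) u) - 2 * (walsh_level * signed_hit_sum (int k) (g v) v)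
        - 2 * (walsh_level * signed_hit_sum (int k) (g w) w)
        - 2 * (walsh_level * signed_hit_sum (int k) (g u + g v + g w) (u + v + w))"
      unfolding codeword_count_triple by (simp add: algebra_simps)
    finally show ?thesis
      by (simp only: hit_sum_pair[OF \<open>A = UNIV\<close> that(1)] hit_sum_pair[OF \<open>A = UNIV\<close> that(2)]
          hit_sum_pair[OF \<open>A = UNIV\<close> that(3)] signed_hit_sum_point
          signed_hit_sum_triple[OF \<open>A = UNIV\<close> that])
  qed
  obtain u v w where T: "T = {u, v, w}" and distinct: "u \<noteq> v" "u \<noteq> w" "v \<noteq> w"
    using \<open>card T = 3\<close> by (auto simp: card_3_iff)
  obtain u' v' w' where T': "T' = {u', v', w'}" and distinct': "u' \<noteq> v'" "u' \<noteq> w'" "v' \<noteq> w'"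
    using \<open>card T' = 3\<close> by (auto simp: card_3_iff)
  have "16 * walsh_level * int (codeword_count k T) = 16 * walsh_level * int (codeword_count k T')"
    unfolding T T' count[OF distinct] count[OF distinct'] ..
  then show ?thesis
    using walsh_level_pos by simp
qed

lemma inj_supp: "inj supp"
  by (rule injI) (simp add: supp_def fun_eq_iff set_eq_iff)

lemma card_blocks_containing:
  "card {B\<in>supp ` {c\<in>code_D m g A. hweight c = k}. T \<subseteq> B} = codeword_count k T"
proof -
  have "{B\<in>supp ` {c\<in>code_D m g A. hweight c = k}. T \<subseteq> B} =
      (\<lambda>p. supp (codeword p)) ` {p\<in>params. hweight (codeword p) = k \<and> T \<subseteq> supp (codeword p)}"
    unfolding code_D_eq by auto
  moreover have "inj_on (\<lambda>p. supp (codeword p)) {p\<in>params. hweight (codeword p) = k \<and> T \<subseteq> supp (codeword p)}"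
    using inj_on_codeword inj_supp by (auto simp: inj_on_def)
  ultimately show ?thesis
    by (simp add: card_image codeword_count_def)
qed

lemma weight_count_code_D: "weight_count (code_D m g A) k = codeword_count k {}"
proof -
  have "{c\<in>code_D m g A. hweight c = k} = codeword ` {p\<in>params. hweight (codeword p) = k \<and> {} \<subseteq> supp (codeword p)}"
    unfolding code_D_eq by auto
  then show ?thesis
    using inj_on_codeword by (simp add: weight_count_def codeword_count_def card_image inj_on_subset)
qed

lemma weight_count_code_D_hits:
  "2 * int (weight_count (code_D m g A) k) =
    2 * (weight_hits (int k) (2 ^ m) + (2 ^ m - 1) * weight_hits (int k) 0)
    + (2 ^ r - 1) * (2 * 2 ^ m * weight_hits (int k) 0 + (weight_hits (int k) walsh_level - weight_hits (int k) 0) * 2 ^ m)"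
proof -
  have "hit_sum (int k) 0 0 = (\<Sum>a\<in>A. \<Sum>b\<in>UNIV. weight_hits (int k) (walsh m g a b))"
    by (simp add: hit_sum_def)
  then show ?thesis
    unfolding weight_count_code_D codeword_count_empty
    by (simp only:) (rule sum_A_walsh_even[where F="weight_hits (int k)", OF weight_hits_uminus])
qed

lemma weight_distribution:
  "weight_count (code_D m g A) k =
    (if k = 0 then 1
     else if k = 2 ^ (m - 1) - 2 ^ ((m - 1) div 2) then 2 ^ (m - 1) * (2 ^ r - 1)
     else if k = 2 ^ (m - 1) then 2 ^ (m + r) + 2 ^ m - 2
     else if k = 2 ^ (m - 1) + 2 ^ ((m - 1) div 2) then 2 ^ (m - 1) * (2 ^ r - 1)
     else if k = 2 ^ m then 1
     else 0)"
proof -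
  define M H :: nat where "M = 2 ^ (m - 1)" and "H = 2 ^ ((m - 1) div 2)"
  have n: "(2::nat) ^ m = 2 * M" and nr: "(2::nat) ^ (m + r) = 2 ^ r * (2 * M)"
    using m_ge_3 by (simp_all add: M_def power_add flip: power_Suc)
  have L: "walsh_level = 2 * int H"
    using m_ge_3 odd_m by (auto simp: walsh_level_def H_def elim!: oddE simp flip: power_Suc)
  have "H < M"
    using m_ge_3 by (simp add: M_def H_def)
  have n_int: "(2::int) ^ m = 2 * int M"
    using n by (metis of_nat_mult of_nat_numeral of_nat_power)
  have hits_n: "weight_hits (int k) (2 ^ m) = of_bool (k = 0) + of_bool (k = 2 * M)"
    by (auto simp: weight_hits_def n_int)
  have hits_0: "weight_hits (int k) 0 = 2 * of_bool (k = M)"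
    by (auto simp: weight_hits_def n_int)
  have hits_L: "weight_hits (int k) walsh_level = of_bool (k = M - H) + of_bool (k = M + H)"
    using \<open>H < M\<close> by (auto simp: weight_hits_def n_int L)
  have "2 * int (weight_count (code_D m g A) k) =
    2 * (of_bool (k = 0) + of_bool (k = 2 * M) + (2 * int M - 1) * (2 * of_bool (k = M)))
    + (2 ^ r - 1) * (2 * (2 * int M) * (2 * of_bool (k = M))
        + (of_bool (k = M - H) + of_bool (k = M + H) - 2 * of_bool (k = M)) * (2 * int M))"
    using weight_count_code_D_hits[of k, unfolded hits_n hits_0 hits_L, unfolded n_int] .
  moreover have "0 < H" and "(1::nat) \<le> 2 ^ r"
    by (simp_all add: H_def)
  ultimately have "int (weight_count (code_D m g A) k) =
    (if k = 0 then 1 else if k = M - H then int M * (2 ^ r - 1) else if k = M then 2 ^ r * (2 * int M) + 2 * int M - 2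
      else if k = M + H then int M * (2 ^ r - 1) else if k = 2 * M then 1 else 0)"
    using \<open>H < M\<close> by (auto simp: algebra_simps)
  also have "\<dots> =
    int (if k = 0 then 1 else if k = M - H then M * (2 ^ r - 1) else if k = M then 2 ^ r * (2 * M) + 2 * M - 2
      else if k = M + H then M * (2 ^ r - 1) else if k = 2 * M then 1 else 0)"
    using \<open>(1::nat) \<le> 2 ^ r\<close> \<open>H < M\<close> by simp
  finally show ?thesis
    unfolding M_def[symmetric] H_def[symmetric] n nr of_nat_eq_iff .
qed

lemma blocks_subset_card:
  "\<forall>b\<in>supp ` {c\<in>code_D m g A. hweight c = k}. b \<subseteq> UNIV \<and> card b = k"
  by (auto simp: hweight_def)

lemma card_blocks: "card (supp ` {c\<in>code_D m g A. hweight c = k}) = weight_count (code_D m g A) k"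
  unfolding weight_count_def by (rule card_image) (rule inj_on_subset[OF inj_supp], simp)

theorem code_D_design_1:
  "t_design UNIV (supp ` {c\<in>code_D m g A. hweight c = k}) 1 (2 ^ m) k
    (real k * real (weight_count (code_D m g A) k) / 2 ^ m)"
proof -
  have "t_design UNIV (supp ` {c\<in>code_D m g A. hweight c = k}) 1 (card (UNIV::'a set)) k
      (real (weight_count (code_D m g A) k) * real (k choose 1) / real (card (UNIV::'a set) choose 1))"
    unfolding card_blocks[symmetric]
  proof (rule t_design_if_uniform[OF finite blocks_subset_card])
    show "1 \<le> card (UNIV::'a set)"
      by (simp add: card_UNIV)
    fix T T' :: "'a set"
    assume "card T = 1" and "card T' = 1"
    then show "card {b\<in>supp ` {c\<in>code_D m g A. hweight c = k}. T \<subseteq> b} =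
        card {b\<in>supp ` {c\<in>code_D m g A. hweight c = k}. T' \<subseteq> b}"
      by (auto simp: card_blocks_containing card_1_singleton_iff intro: codeword_count_point_indep)
  qed
  then show ?thesis
    by (simp add: card_UNIV mult.commute)
qed

theorem code_D_design_3:
  assumes "A = UNIV"
  shows "t_design UNIV (supp ` {c\<in>code_D m g A. hweight c = k}) 3 (2 ^ m) k
    (real k * (real k - 1) * (real k - 2) * real (weight_count (code_D m g A) k) /
      ((2 ^ m) * (2 ^ m - 1) * (2 ^ m - 2)))"
proof -
  have "(2::nat) ^ 3 \<le> 2 ^ m"
    using m_ge_3 by (intro power_increasing) auto
  then have "t_design UNIV (supp ` {c\<in>code_D m g A. hweight c = k}) 3 (card (UNIV::'a set)) k
      (real (weight_count (code_D m g A) k) * real (k choose 3) / real (card (UNIV::'a set) choose 3))"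
    unfolding card_blocks[symmetric]
    by (intro t_design_if_uniform[OF finite blocks_subset_card])
      (auto simp: card_UNIV card_blocks_containing intro: codeword_count_triple_indep[OF assms])
  moreover have choose_3: "real (x choose 3) = real x * (real x - 1) * (real x - 2) / 6" for x
    by (simp add: binomial_gbinomial gbinomial_prod_rev numeral_3_eq_3 lessThan_Suc)
  ultimately show ?thesis
    by (simp add: card_UNIV choose_3 mult.commute mult.left_commute)
qed

end

theorem theorem6:
  fixes m r :: nat and g :: "'a::{field,finite} \<Rightarrow> 'a" and A :: "'a set"
  assumes card_field: "card (UNIV::'a set) = 2 ^ m"
    and m_ge: "m \<ge> 3" and m_odd: "odd m"
    and ab: "almost_bent m g" and g0: "g 0 = 0"
    and subgrp: "additive_subgroup A" and cardA: "card A = 2 ^ r"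
    and r_ge: "1 \<le> r" and r_le: "r \<le> m"
  shows "(\<forall>k. weight_count (code_D m g A) k =
            (if k = 0 then 1
             else if k = 2 ^ (m - 1) - 2 ^ ((m - 1) div 2) then 2 ^ (m - 1) * (2 ^ r - 1)
             else if k = 2 ^ (m - 1) then 2 ^ (m + r) + 2 ^ m - 2
             else if k = 2 ^ (m - 1) + 2 ^ ((m - 1) div 2) then 2 ^ (m - 1) * (2 ^ r - 1)
             else if k = 2 ^ m then 1
             else 0))
       \<and> (\<forall>k. weight_count (code_D m g A) k \<noteq> 0 \<longrightarrow>
            (let B = supp ` {c \<in> code_D m g A. hweight c = k};
                 Ak = real (weight_count (code_D m g A) k);
                 n = (2::real) ^ m
             in (r = m \<longrightarrow> t_design (UNIV::'a set) B 3 (2 ^ m) k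
                    (real k * (real k - 1) * (real k - 2) * Ak / (n * (n - 1) * (n - 2))))
              \<and> (r \<noteq> m \<longrightarrow> t_design (UNIV::'a set) B 1 (2 ^ m) k (real k * Ak / n))))"
proof -
  interpret almost_bent_code m g A r
    using card_field m_odd ab m_ge g0 subgrp cardA by unfold_locales
  have "A = UNIV" if "r = m"
    using card_subset_eq[of UNIV A] cardA card_field that by simp
  then show ?thesis
    unfolding Let_def using weight_distribution code_D_design_1 code_D_design_3 by blast
qed

end
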